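(* Let $\mathfrak{A}_m(W)(s,E_m,Q_m,Q_n)$ be the annihilating operator of the colored Jones polynomial of the Whitehead link defined in the context, and let $\varepsilon_s$ denote evaluation at $s=1$ (after which $E_m,Q_m,Q_n$ commute). Then \[\varepsilon_s\mathfrak{A}_m(W)(s,E_m,Q_m,Q_n)=-\frac{1}{(1+Q_m^2)^2Q_m^2Q_n^2}(E_m+1)(E_m-Q_m^2)A^{\mathrm{Lk}}_m(W)(E_m,Q_m,Q_n),\] where $A^{\mathrm{Lk}}_m(W)(E_m,Q_m,Q_n)=Q_m^4Q_n^2E_m^3+(Q_m^4Q_n^4-Q_m^2Q_n^4+Q_m^4-2Q_m^2Q_n^2-Q_m^2+Q_n^2)E_m^2+(Q_m^4Q_n^2-Q_m^2Q_n^4-2Q_m^2Q_n^2+Q_n^4-Q_m^2+1)E_m+Q_n^2.$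
   Context: $s$ is an indeterminate. Work in the algebra of polynomials in $E_m$ with coefficients in $\mathbb{Q}(s,Q_m,Q_n)$ written on the left, with $E_m\,p(s,Q_m,Q_n)=p(s,sQ_m,Q_n)\,E_m$ (the composition rule for $(E_mf)(m,n)=f(m+1,n)$, $(Q_mf)(m,n)=s^mf(m,n)$, $(Q_nf)(m,n)=s^nf(m,n)$). Put $\Phi_k(Q_m)=1-s^kQ_m^4$ and $u_1=\frac{1}{\Phi_6(Q_m)}E_m-\frac{s^2Q_m^2}{\Phi_2(Q_m)}$, $v_1=\frac{s^2Q_m^2}{\Phi_6(Q_m)}E_m-\frac{1}{\Phi_2(Q_m)}$, $u_2=\frac{s^{12}Q_m^4}{\Phi_{10}(Q_m)\Phi_{12}(Q_m)}E_m^2-\frac{s^4(1+s^2)Q_m^2}{\Phi_6(Q_m)\Phi_{10}(Q_m)}E_m+\frac{1}{\Phi_4(Q_m)\Phi_6(Q_m)}$, $v_2=\frac{1}{\Phi_{10}(Q_m)\Phi_{12}(Q_m)}E_m^2-\frac{s^2(1+s^2)Q_m^2}{\Phi_6(Q_m)\Phi_{10}(Q_m)}E_m+\frac{s^4Q_m^4}{\Phi_4(Q_m)\Phi_6(Q_m)}$, $Y=u_2u_1(E_m-s^2Q_m^2)$, $P^0_W(s,E_m,Q_m,Q_n)=(s^2-s^4)u_2v_1(Q_m^2E_m-1)+s^2(Q_n^2+1+Q_n^{-2})u_2u_1(Q_m^2E_m-1)+s^2u_2u_1(s^2Q_m^2+s^{-2}Q_m^{-2})(Q_m^2E_m-1)+(s^2-s^4)u_2(Q_m^2E_m-1)-Y(Q_m^2Q_n^2+Q_m^2Q_n^{-2}+3+Q_m^{-2}Q_n^2+Q_m^{-2}Q_n^{-2})+s^{-2}(Q_n^2-s^2+Q_n^{-2})v_2v_1(E_m-s^2Q_m^2)+s^{-2}v_2v_1(s^2Q_m^2+s^{-2}Q_m^{-2})(E_m-s^2Q_m^2)+(s^{-4}-s^{-2})v_2Q_m^{-2}(E_m-s^2Q_m^2)-s^{-4}v_2u_1(E_m-s^2Q_m^2)$,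 $P^1_W(s,E_m,Q_m)=(E_m+1)\frac{(1-s^2Q_m^2)(1-s^6Q_m^2)}{1+s^4Q_m^2}$, and $\mathfrak{A}_m(W)=P^1_W(s,sE_m,Q_m)P^0_W(s,sE_m,Q_m,Q_n)$ (substitute $sE_m$ for $E_m$). Here $\varepsilon_s$ sends a left-normalized expression $\sum_k c_k(s,Q_m,Q_n)E_m^k$ to the commutative polynomial $\sum_k c_k(1,Q_m,Q_n)E_m^k$. *)

theory Defs
  imports "HOL-Computational_Algebra.Polynomial" "HOL-Computational_Algebra.Fraction_Field"
begin

text \<open>Polynomials in s, Q_m, Q_n over the rationals: the innermost variable is s,
  the middle one Q_m, the outermost one Q_n.\<close>
type_synonym rp3 = "rat poly poly poly"

type_synonym K = "rp3 fract"

text \<open>Polynomials in Q_m (inner) and Q_n (outer), and the field Q(Q_m,Q_n).\<close>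
type_synonym rp2 = "rat poly poly"
type_synonym L = "rp2 fract"

definition sK :: K where "sK = Fract [:[:[:0, 1:]:]:] 1"
definition QmK :: K where "QmK = Fract [:[:0, 1:]:] 1"
definition QnK :: K where "QnK = Fract [:0, 1:] 1"

definition QmL :: L where "QmL = Fract [:[:0, 1:]:] 1"
definition QnL :: L where "QnL = Fract [:0, 1:] 1"

text \<open>The substitution Q_m := s Q_m on polynomials, and its extension to Q(s,Q_m,Q_n).\<close>
definition sig3 :: "rp3 \<Rightarrow> rp3" where
  "sig3 p = map_poly (\<lambda>q. pcompose q [:0, [:0, 1:]:]) p"

definition sigK :: "K \<Rightarrow> K" where
  "sigK x = (SOME y. \<exists>p q. q \<noteq> 0 \<and> x = Fract p q \<and> y = Fract (sig3 p) (sig3 q))"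

definition ev1 :: "rp3 \<Rightarrow> rp2" where
  "ev1 p = map_poly (map_poly (\<lambda>c. poly c 1)) p"

definition eval_s1 :: "K \<Rightarrow> L \<Rightarrow> bool" where
  "eval_s1 c d \<longleftrightarrow> (\<exists>p q. q \<noteq> 0 \<and> ev1 q \<noteq> 0 \<and> c = Fract p q \<and> d = Fract (ev1 p) (ev1 q))"

text \<open>A left-normalized operator sum_k c_k E_m^k is represented by the polynomial
  with coefficients c_k; multiplication uses E_m c = sigma(c) E_m.\<close>
definition skm :: "K poly \<Rightarrow> K poly \<Rightarrow> K poly" (infixl "**" 70) where
  "a ** b = (\<Sum>i\<le>degree a. smult (coeff a i) (monom 1 i * map_poly (sigK ^^ i) b))"

definition Em :: "K poly" where "Em = monom 1 1"

abbreviation C :: "K \<Rightarrow> K poly" where "C c \<equiv> [:c:]"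

definition Phi :: "nat \<Rightarrow> K" where "Phi k = 1 - sK ^ k * QmK ^ 4"

definition u1 :: "K poly \<Rightarrow> K poly" where
  "u1 e = C (1 / Phi 6) ** e - C (sK^2 * QmK^2 / Phi 2)"
definition v1 :: "K poly \<Rightarrow> K poly" where
  "v1 e = C (sK^2 * QmK^2 / Phi 6) ** e - C (1 / Phi 2)"
definition u2 :: "K poly \<Rightarrow> K poly" where
  "u2 e = C (sK^12 * QmK^4 / (Phi 10 * Phi 12)) ** e ** e
        - C (sK^4 * (1 + sK^2) * QmK^2 / (Phi 6 * Phi 10)) ** e
        + C (1 / (Phi 4 * Phi 6))"
definition v2 :: "K poly \<Rightarrow> K poly" where
  "v2 e = C (1 / (Phi 10 * Phi 12)) ** e ** e
        - C (sK^2 * (1 + sK^2) * QmK^2 / (Phi 6 * Phi 10)) ** e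
        + C (sK^4 * QmK^4 / (Phi 4 * Phi 6))"
definition Yop :: "K poly \<Rightarrow> K poly" where
  "Yop e = u2 e ** u1 e ** (e - C (sK^2 * QmK^2))"

definition P0 :: "K poly \<Rightarrow> K poly" where
  "P0 e =
     C (sK^2 - sK^4) ** u2 e ** v1 e ** (C (QmK^2) ** e - 1)
   + C (sK^2 * (QnK^2 + 1 + inverse (QnK^2))) ** u2 e ** u1 e ** (C (QmK^2) ** e - 1)
   + C (sK^2) ** u2 e ** u1 e ** C (sK^2 * QmK^2 + inverse (sK^2) * inverse (QmK^2))
       ** (C (QmK^2) ** e - 1)
   + C (sK^2 - sK^4) ** u2 e ** (C (QmK^2) ** e - 1)
   - Yop e ** C (QmK^2 * QnK^2 + QmK^2 * inverse (QnK^2) + 3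
                 + inverse (QmK^2) * QnK^2 + inverse (QmK^2) * inverse (QnK^2))
   + C (inverse (sK^2) * (QnK^2 - sK^2 + inverse (QnK^2))) ** v2 e ** v1 e
       ** (e - C (sK^2 * QmK^2))
   + C (inverse (sK^2)) ** v2 e ** v1 e ** C (sK^2 * QmK^2 + inverse (sK^2) * inverse (QmK^2))
       ** (e - C (sK^2 * QmK^2))
   + C (inverse (sK^4) - inverse (sK^2)) ** v2 e ** C (inverse (QmK^2)) ** (e - C (sK^2 * QmK^2))
   - C (inverse (sK^4)) ** v2 e ** u1 e ** (e - C (sK^2 * QmK^2))"

definition P1 :: "K poly \<Rightarrow> K poly" where
  "P1 e = (e + 1) ** C ((1 - sK^2 * QmK^2) * (1 - sK^6 * QmK^2) / (1 + sK^4 * QmK^2))"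

definition AmW :: "K poly" where
  "AmW = P1 (C sK ** Em) ** P0 (C sK ** Em)"

definition eps_s :: "K poly \<Rightarrow> L poly \<Rightarrow> bool" where
  "eps_s a b \<longleftrightarrow> (\<forall>k. eval_s1 (coeff a k) (coeff b k))"

definition ALk :: "L poly" where
  "ALk = [: QnL^2,
           QmL^4 * QnL^2 - QmL^2 * QnL^4 - 2 * QmL^2 * QnL^2 + QnL^4 - QmL^2 + 1,
           QmL^4 * QnL^4 - QmL^2 * QnL^4 + QmL^4 - 2 * QmL^2 * QnL^2 - QmL^2 + QnL^2,
           QmL^4 * QnL^2 :]"

end

theory Submission
  imports Defs "HOL-Computational_Algebra.Polynomial_Factorial"
begin

(* Setting s = 1 is a ring homomorphism on the part of Q(s,Q_m,Q_n) that is regular at s = 1,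
   and it turns the twist Q_m -> s Q_m into the identity.  Hence eps_s maps the skew product
   to the commutative product, and eps_s A_m(W) is P^1_W * P^0_W evaluated at s = 1 with E_m
   in place of s E_m.  Write a = Q_m^2, b = Q_n^2 and D = 1 - a^2.  At s = 1 the building
   blocks become u_1 = (E - a)/D, v_1 = (a E - 1)/D, u_2 = v_1^2, v_2 = u_1^2, so that
   P^0_W = (E - a) N(E) / (D^3 a b) for an explicit cubic N, and P^1_W = (E + 1)(1 - a)^2/(1 + a).
   The cubic factors as N = -(1 - a)(1 + a)^2 A^Lk_m(W), and the factors (1 - a) cancel. *)

locale comm_ring_hom =
  fixes h :: "'a::comm_ring_1 \<Rightarrow> 'b::comm_ring_1"
  assumes hom_1 [simp]: "h 1 = 1"
    and hom_add [simp]: "h (x + y) = h x + h y"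
    and hom_mult [simp]: "h (x * y) = h x * h y"
begin

lemma hom_0 [simp]: "h 0 = 0"
  using hom_add[of 0 0] by simp

lemma hom_uminus [simp]: "h (- x) = - h x"
  using hom_add[of x "- x"] by (simp add: eq_neg_iff_add_eq_0 add.commute)

lemma hom_diff [simp]: "h (x - y) = h x - h y"
  using hom_add[of x "- y"] by simp

lemma hom_power [simp]: "h (x ^ n) = h x ^ n"
  by (induct n) simp_all

lemma hom_sum [simp]: "h (sum f A) = (\<Sum>a\<in>A. h (f a))"
  by (induct A rule: infinite_finite_induct) simp_all

lemma hom_of_nat [simp]: "h (of_nat n) = of_nat n"
  by (induct n) simp_all

lemma hom_numeral [simp]: "h (numeral n) = numeral n"
  using hom_of_nat[of "numeral n"] by (simp del: hom_of_nat)

lemma map_poly_hom: "comm_ring_hom (map_poly h)"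
  by unfold_locales (simp_all add: poly_eq_iff coeff_map_poly coeff_mult)

lemma map_poly_pcompose: "map_poly h (p \<circ>\<^sub>p q) = map_poly h p \<circ>\<^sub>p map_poly h q"
proof -
  interpret map_poly: comm_ring_hom "map_poly h"
    by (rule map_poly_hom)
  show ?thesis
    by (induct p) (simp_all add: pcompose_pCons map_poly_pCons)
qed

end

interpretation poly_hom: comm_ring_hom "\<lambda>p. poly p x"
  by unfold_locales simp_all

interpretation pcompose_hom: comm_ring_hom "\<lambda>p. p \<circ>\<^sub>p q"
  by unfold_locales (simp_all add: pcompose_add pcompose_mult pcompose_1)

interpretation to_fract: comm_ring_hom to_fract
  by unfold_locales simp_all

lemma ev1_eq_map_poly: "ev1 = map_poly (map_poly (\<lambda>c. poly c 1))"
  by (simp add: ev1_def fun_eq_iff)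

lemma sig3_eq_map_poly: "sig3 = map_poly (\<lambda>q. q \<circ>\<^sub>p [:0, [:0, 1:]:])"
  by (simp add: sig3_def fun_eq_iff)

interpretation ev1: comm_ring_hom ev1
  unfolding ev1_eq_map_poly
  by (intro comm_ring_hom.map_poly_hom poly_hom.comm_ring_hom_axioms)

interpretation sig3: comm_ring_hom sig3
  unfolding sig3_eq_map_poly
  by (intro comm_ring_hom.map_poly_hom pcompose_hom.comm_ring_hom_axioms)

lemma sig3_eq_0_iff: "sig3 p = 0 \<longleftrightarrow> p = 0"
  unfolding sig3_eq_map_poly by (subst map_poly_eq_0_iff) (auto simp: pcompose_eq_0_iff)

lemma ev1_sig3: "ev1 (sig3 p) = ev1 p"
proof -
  let ?h = "\<lambda>c. poly c (1::rat)"
  have "map_poly ?h [:0, [:0, 1:]:] = [:0, 1:]"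
    by (simp add: map_poly_pCons)
  then have "map_poly ?h (q \<circ>\<^sub>p [:0, [:0, 1:]:]) = map_poly ?h q" for q
    by (simp only: poly_hom.map_poly_pcompose pcompose_idR)
  then show ?thesis
    by (simp add: ev1_eq_map_poly sig3_eq_map_poly map_poly_map_poly o_def)
qed

lemma sigK_Fract:
  assumes "q \<noteq> 0"
  shows "sigK (Fract p q) = Fract (sig3 p) (sig3 q)"
proof -
  let ?P = "\<lambda>y. \<exists>p' q'. q' \<noteq> 0 \<and> Fract p q = Fract p' q' \<and> y = Fract (sig3 p') (sig3 q')"
  have "?P (Fract (sig3 p) (sig3 q))"
    using assms by blast
  then have "?P (sigK (Fract p q))"
    unfolding sigK_def by (rule someI)
  then obtain p' q' where "q' \<noteq> 0" "Fract p q = Fract p' q'"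
    and sigK_eq: "sigK (Fract p q) = Fract (sig3 p') (sig3 q')"
    by blast
  then have "sig3 p * sig3 q' = sig3 p' * sig3 q"
    using assms by (simp add: eq_fract flip: sig3.hom_mult)
  then show ?thesis
    using assms \<open>q' \<noteq> 0\<close> by (simp add: sigK_eq eq_fract sig3_eq_0_iff)
qed

lemma eval_s1_Fract:
  "q \<noteq> 0 \<Longrightarrow> ev1 q \<noteq> 0 \<Longrightarrow> eval_s1 (Fract p q) (Fract (ev1 p) (ev1 q))"
  unfolding eval_s1_def by blast

lemma eval_s1E:
  assumes "eval_s1 c d"
  obtains p q where "q \<noteq> 0" "ev1 q \<noteq> 0" "c = Fract p q" "d = Fract (ev1 p) (ev1 q)"
  using assms unfolding eval_s1_def by blast

lemma eval_s1_sigK: "eval_s1 c d \<Longrightarrow> eval_s1 (sigK c) d"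
  by (erule eval_s1E) (metis eval_s1_Fract sigK_Fract sig3_eq_0_iff ev1_sig3)

lemma eval_s1_sigK_funpow: "eval_s1 c d \<Longrightarrow> eval_s1 ((sigK ^^ i) c) d"
  by (induct i) (simp_all add: eval_s1_sigK)

lemma eval_s1_to_fract: "eval_s1 (to_fract p) (to_fract (ev1 p))"
  using eval_s1_Fract[of 1 p] by (simp add: to_fract_def)

lemma eval_s1_0: "eval_s1 0 0"
  using eval_s1_to_fract[of 0] by simp

lemma eval_s1_1: "eval_s1 1 1"
  using eval_s1_to_fract[of 1] by simp

lemma eval_s1_add:
  assumes "eval_s1 a b" "eval_s1 c d"
  shows "eval_s1 (a + c) (b + d)"
proof -
  obtain p q p' q' where "q \<noteq> 0" "ev1 q \<noteq> 0" "q' \<noteq> 0" "ev1 q' \<noteq> 0"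
    and "a = Fract p q" "b = Fract (ev1 p) (ev1 q)" "c = Fract p' q'" "d = Fract (ev1 p') (ev1 q')"
    using assms by (metis eval_s1E)
  then show ?thesis
    using eval_s1_Fract[of "q * q'" "p * q' + p' * q"] by simp
qed

lemma eval_s1_mult:
  assumes "eval_s1 a b" "eval_s1 c d"
  shows "eval_s1 (a * c) (b * d)"
proof -
  obtain p q p' q' where "q \<noteq> 0" "ev1 q \<noteq> 0" "q' \<noteq> 0" "ev1 q' \<noteq> 0"
    and "a = Fract p q" "b = Fract (ev1 p) (ev1 q)" "c = Fract p' q'" "d = Fract (ev1 p') (ev1 q')"
    using assms by (metis eval_s1E)
  then show ?thesis
    using eval_s1_Fract[of "q * q'" "p * p'"] by simp
qed

lemma eval_s1_uminus: "eval_s1 a b \<Longrightarrow> eval_s1 (- a) (- b)"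
  by (erule eval_s1E) (metis eval_s1_Fract ev1.hom_uminus minus_fract)

lemma eval_s1_diff: "eval_s1 a b \<Longrightarrow> eval_s1 c d \<Longrightarrow> eval_s1 (a - c) (b - d)"
  using eval_s1_add[of a b "- c" "- d"] eval_s1_uminus[of c d] by simp

lemma eval_s1_inverse:
  assumes "eval_s1 a b" "b \<noteq> 0"
  shows "eval_s1 (inverse a) (inverse b)"
  using assms
proof (elim eval_s1E)
  fix p q assume "q \<noteq> 0" "ev1 q \<noteq> 0" "a = Fract p q" "b = Fract (ev1 p) (ev1 q)"
  moreover from this have "ev1 p \<noteq> 0" "p \<noteq> 0"
    using \<open>b \<noteq> 0\<close> by (auto simp: Zero_fract_def eq_fract)
  ultimately show ?thesis
    by (simp add: eval_s1_Fract)
qed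

lemma eval_s1_divide:
  "eval_s1 a b \<Longrightarrow> eval_s1 c d \<Longrightarrow> d \<noteq> 0 \<Longrightarrow> eval_s1 (a / c) (b / d)"
  by (simp add: divide_inverse eval_s1_mult eval_s1_inverse)

lemma eval_s1_power: "eval_s1 a b \<Longrightarrow> eval_s1 (a ^ n) (b ^ n)"
  by (induct n) (simp_all add: eval_s1_1 eval_s1_mult)

lemma eval_s1_numeral: "eval_s1 (numeral n) (numeral n)"
  using eval_s1_to_fract[of "numeral n"] by (simp add: ev1.hom_numeral)

lemma eval_s1_sum:
  "(\<And>i. i \<in> A \<Longrightarrow> eval_s1 (f i) (g i)) \<Longrightarrow> eval_s1 (sum f A) (sum g A)"
  by (induct A rule: infinite_finite_induct) (auto simp: eval_s1_0 eval_s1_add)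

lemma eval_s1_sK: "eval_s1 sK 1"
  using eval_s1_to_fract[of "[:[:[:0, 1:]:]:]"]
  by (simp add: sK_def to_fract_def ev1_def map_poly_pCons One_fract_def flip: one_pCons)

lemma eval_s1_QmK: "eval_s1 QmK QmL"
  using eval_s1_to_fract[of "[:[:0, 1:]:]"]
  by (simp add: QmK_def QmL_def to_fract_def ev1_def map_poly_pCons)

lemma eval_s1_QnK: "eval_s1 QnK QnL"
  using eval_s1_to_fract[of "[:0, 1:]"]
  by (simp add: QnK_def QnL_def to_fract_def ev1_def map_poly_pCons)

lemmas eval_s1_intros = eval_s1_0 eval_s1_1 eval_s1_numeral eval_s1_sK eval_s1_QmK eval_s1_QnK
  eval_s1_add eval_s1_diff eval_s1_mult eval_s1_divide eval_s1_inverse eval_s1_power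

lemma sigK_funpow_0: "(sigK ^^ i) 0 = 0"
proof -
  have "sigK 0 = 0"
    using sigK_Fract[of 1 0] by (simp add: Zero_fract_def sig3.hom_0)
  then show ?thesis
    by (induct i) simp_all
qed

lemma coeff_skm: "coeff (a ** b) k = (\<Sum>i\<le>k. coeff a i * (sigK ^^ i) (coeff b (k - i)))"
proof -
  define g where "g i = (if i \<le> k then coeff a i * (sigK ^^ i) (coeff b (k - i)) else 0)" for i
  have "coeff (a ** b) k = (\<Sum>i\<le>degree a. g i)"
    unfolding skm_def coeff_sum g_def
    by (intro sum.cong refl) (auto simp: coeff_monom_mult coeff_map_poly sigK_funpow_0)
  also have "\<dots> = (\<Sum>i\<le>degree a + k. g i)"
    by (rule sum.mono_neutral_left) (auto simp: g_def coeff_eq_0)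
  also have "\<dots> = (\<Sum>i\<le>k. g i)"
    by (rule sum.mono_neutral_right) (auto simp: g_def)
  finally show ?thesis
    by (simp add: g_def)
qed

lemma eps_s_skm: "eps_s a A \<Longrightarrow> eps_s b B \<Longrightarrow> eps_s (a ** b) (A * B)"
  unfolding eps_s_def coeff_skm coeff_mult
  by (auto intro!: eval_s1_sum eval_s1_mult eval_s1_sigK_funpow)

lemma eps_s_add: "eps_s a A \<Longrightarrow> eps_s b B \<Longrightarrow> eps_s (a + b) (A + B)"
  by (simp add: eps_s_def eval_s1_add)

lemma eps_s_diff: "eps_s a A \<Longrightarrow> eps_s b B \<Longrightarrow> eps_s (a - b) (A - B)"
  by (simp add: eps_s_def eval_s1_diff)

lemma eps_s_0: "eps_s 0 0"
  by (simp add: eps_s_def eval_s1_0)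

lemma eps_s_pCons: "eval_s1 c d \<Longrightarrow> eps_s p P \<Longrightarrow> eps_s (pCons c p) (pCons d P)"
  by (simp add: eps_s_def coeff_pCons split: nat.split)

lemma eps_s_const: "eval_s1 c d \<Longrightarrow> eps_s [:c:] [:d:]"
  by (intro eps_s_pCons eps_s_0)

lemma eps_s_1: "eps_s 1 1"
  unfolding one_pCons by (intro eps_s_const eval_s1_1)

lemmas eps_s_intros = eps_s_1 eps_s_const eps_s_add eps_s_diff eps_s_skm

lemma eps_s_sK_Em: "eps_s (C sK ** Em) [:0, 1:]"
proof -
  have "Em = [:0, 1:]"
    by (simp add: Em_def monom_Suc)
  then have "eps_s Em [:0, 1:]"
    by (metis eps_s_pCons eps_s_0 eval_s1_0 eval_s1_1)
  then show ?thesis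
    using eps_s_skm[OF eps_s_const[OF eval_s1_sK]] by (simp only: mult_1 flip: one_pCons)
qed

instance fract :: ("{idom, ring_char_0}") ring_char_0
proof
  show "inj (of_nat :: nat \<Rightarrow> 'a fract)"
    by (rule injI) (metis of_nat_eq_iff to_fract_eq_iff to_fract.hom_of_nat)
qed

lemma QmL_eq_to_fract: "QmL = to_fract [:[:0, 1:]:]"
  by (simp add: QmL_def to_fract_def)

lemma QmL_neq_0: "QmL \<noteq> 0"
  by (simp add: QmL_eq_to_fract)

lemma QnL_neq_0: "QnL \<noteq> 0"
  by (simp add: QnL_def Zero_fract_def eq_fract)

lemma QmL_pow4_neq_1: "QmL^4 \<noteq> 1"
proof -
  have "poly (poly ([:[:0, 1:]:]^4) 0) 2 \<noteq> (1::rat)"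
    by simp
  then have "[:[:0, 1:]:]^4 \<noteq> (1 :: rp2)"
    by (rule contrapos_nn) simp
  then show ?thesis
    unfolding QmL_eq_to_fract by (metis to_fract_eq_iff to_fract.hom_1 to_fract.hom_power)
qed

lemma one_minus_QmL_pow4: "1 - QmL^4 = (1 - QmL^2) * (1 + QmL^2)"
  by (simp add: algebra_simps flip: power_add)

lemma one_minus_QmL_pow4_neq_0: "1 - QmL^4 \<noteq> 0"
  using QmL_pow4_neq_1 by simp

lemma one_minus_QmL_sq_neq_0: "1 - QmL^2 \<noteq> 0"
  and one_plus_QmL_sq_neq_0: "1 + QmL^2 \<noteq> 0"
  using one_minus_QmL_pow4_neq_0 unfolding one_minus_QmL_pow4 by simp_all

lemmas QmL_QnL_nonzero = QmL_neq_0 QnL_neq_0 QmL_pow4_neq_1 one_minus_QmL_pow4_neq_0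
  one_minus_QmL_sq_neq_0 one_plus_QmL_sq_neq_0

lemma eps_s_u1:
  assumes "eps_s e E"
  shows "eps_s (u1 e) (smult (1 / (1 - QmL^4)) (E - [:QmL^2:]))"
  apply (rule back_subst[of "eps_s (u1 e)"])
   apply (unfold u1_def Phi_def)
   (* The rules synthesise the image in the schematic argument of back_subst; simp closes the
      nonvanishing side conditions of eval_s1_divide and eval_s1_inverse. *)
   apply (rule eps_s_intros eval_s1_intros assms | simp add: QmL_QnL_nonzero)+
  apply (simp add: QmL_QnL_nonzero smult_diff_right)
  done

lemma eps_s_v1:
  assumes "eps_s e E"
  shows "eps_s (v1 e) (smult (1 / (1 - QmL^4)) (smult (QmL^2) E - 1))"
  apply (rule back_subst[of "eps_s (v1 e)"])
   apply (unfold v1_def Phi_def)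
   apply (rule eps_s_intros eval_s1_intros assms | simp add: QmL_QnL_nonzero)+
  apply (simp add: QmL_QnL_nonzero smult_diff_right)
  done

lemma eps_s_u2:
  assumes "eps_s e E"
  shows "eps_s (u2 e) (smult (1 / (1 - QmL^4)^2) ((smult (QmL^2) E - 1)^2))"
proof -
  (* Naming 1 - Q_m^4 keeps field_simps from multiplying out its powers. *)
  define D where "D = 1 - QmL^4"
  have D_neq_0: "D \<noteq> 0"
    unfolding D_def by (rule one_minus_QmL_pow4_neq_0)
  have "eps_s (u2 e) (smult (1 / D^2) ((smult (QmL^2) E - 1)^2))"
    apply (rule back_subst[of "eps_s (u2 e)"])
     apply (unfold u2_def Phi_def)
     apply (rule eps_s_intros eval_s1_intros assms | simp add: D_neq_0 QmL_QnL_nonzero flip: D_def)+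
    apply (rule poly_ext)
    apply (simp add: field_simps power2_eq_square power4_eq_xxxx algebra_simps D_neq_0 QmL_QnL_nonzero
        flip: D_def)
    done
  then show ?thesis
    by (simp add: D_def)
qed

lemma eps_s_v2:
  assumes "eps_s e E"
  shows "eps_s (v2 e) (smult (1 / (1 - QmL^4)^2) ((E - [:QmL^2:])^2))"
proof -
  define D where "D = 1 - QmL^4"
  have D_neq_0: "D \<noteq> 0"
    unfolding D_def by (rule one_minus_QmL_pow4_neq_0)
  have "eps_s (v2 e) (smult (1 / D^2) ((E - [:QmL^2:])^2))"
    apply (rule back_subst[of "eps_s (v2 e)"])
     apply (unfold v2_def Phi_def)
     apply (rule eps_s_intros eval_s1_intros assms | simp add: D_neq_0 QmL_QnL_nonzero flip: D_def)+
    apply (rule poly_ext)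
    apply (simp add: field_simps power2_eq_square power4_eq_xxxx algebra_simps D_neq_0 QmL_QnL_nonzero
        flip: D_def)
    done
  then show ?thesis
    by (simp add: D_def)
qed

lemma eps_s_P1:
  assumes "eps_s e E"
  shows "eps_s (P1 e) (smult ((1 - QmL^2)^2 / (1 + QmL^2)) (E + 1))"
  apply (rule back_subst[of "eps_s (P1 e)"])
   apply (unfold P1_def)
   apply (rule eps_s_intros eval_s1_intros assms | simp add: QmL_QnL_nonzero)+
  apply (rule poly_ext)
  apply (simp add: field_simps QmL_QnL_nonzero power2_eq_square algebra_simps)
  done

(* N(E) in P^0_W = (E - a) N(E) / ((1 - a^2)^3 a b) at s = 1, where a = Q_m^2 and b = Q_n^2. *)
definition P0_numerator :: "'a::comm_ring_1 \<Rightarrow> 'a \<Rightarrow> 'a \<Rightarrow> 'a" where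
  "P0_numerator a b y =
     (a*b^2 + a*b + a + a^2*b + b) * (a*y - 1)^3
   - (a^2*b^2 + a^2 + 3*a*b + b^2 + 1) * (a*y - 1)^2 * (y - a)
   + (a*b^2 - a*b + a + a^2*b + b) * (y - a)^2 * (a*y - 1)
   - a*b * (y - a)^3"

lemma (in comm_ring_hom) hom_P0_numerator:
  "h (P0_numerator a b y) = P0_numerator (h a) (h b) (h y)"
  by (simp add: P0_numerator_def)

lemma P0_numerator_factor:
  fixes a b y :: "'a::comm_ring_1"
  shows "P0_numerator a b y = - (1 - a) * (1 + a)^2 *
    (a^2*b*y^3 + (a^2*b^2 - a*b^2 + a^2 - 2*a*b - a + b)*y^2
     + (a^2*b - a*b^2 - 2*a*b + b^2 - a + 1)*y + b)"
  unfolding P0_numerator_def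
  by (simp add: algebra_simps power2_eq_square power3_eq_cube)

lemma P0_numerator_X:
  "P0_numerator [:QmL^2:] [:QnL^2:] [:0, 1:] = smult (- (1 - QmL^2) * (1 + QmL^2)^2) ALk"
  by (rule poly_ext)
    (simp add: poly_hom.hom_P0_numerator P0_numerator_factor ALk_def algebra_simps
      power2_eq_square power3_eq_cube power4_eq_xxxx)

(* P^0_W at s = 1 in the form simp leaves it after substituting the images of u_1, v_1, u_2, v_2,
   with D = 1 - Q_m^4; the terms carrying s^2 - s^4 or s^-4 - s^-2 have vanished. *)
lemma P0_at_s1_eq:
  fixes a b y D :: "'a::field"
  assumes "a \<noteq> 0" "b \<noteq> 0" "D \<noteq> 0"
  shows "(b + 1 + inverse b) * ((a*y - 1)^2 * (y - a) * (a*y - 1)) / (D * D^2)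
    + (a + inverse a) * ((a*y - 1)^2 * (y - a) * (a*y - 1)) / (D * D^2)
    - (a*b + a * inverse b + 3 + inverse a * b + inverse a * inverse b)
        * ((a*y - 1)^2 * (y - a) * (y - a)) / (D * D^2)
    + (b - 1 + inverse b) * ((y - a)^2 * (a*y - 1) * (y - a)) / (D * D^2)
    + (a + inverse a) * ((y - a)^2 * (a*y - 1) * (y - a)) / (D * D^2)
    - (y - a)^2 * (y - a) * (y - a) / (D * D^2)
    = (y - a) * P0_numerator a b y / (D^3 * a * b)"
  using assms unfolding P0_numerator_def
  by (simp add: field_simps power2_eq_square power3_eq_cube)

lemma eps_s_P0:
  assumes "eps_s e E"
  shows "eps_s (P0 e) (smult (1 / ((1 - QmL^4)^3 * QmL^2 * QnL^2))
    ((E - [:QmL^2:]) * P0_numerator [:QmL^2:] [:QnL^2:] E))"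
proof -
  define D where "D = 1 - QmL^4"
  have D_neq_0: "D \<noteq> 0"
    unfolding D_def by (rule one_minus_QmL_pow4_neq_0)
  show ?thesis
    apply (rule back_subst[of "eps_s (P0 e)"])
     apply (unfold P0_def Yop_def)
     apply (rule eps_s_intros eps_s_u1 eps_s_v1 eps_s_u2 eps_s_v2 eval_s1_intros assms
        | simp add: QmL_QnL_nonzero)+
    apply (rule poly_ext)
    apply (simp add: poly_hom.hom_P0_numerator flip: D_def)
    apply (rule P0_at_s1_eq)
      apply (simp_all add: QmL_QnL_nonzero D_neq_0)
    done
qed

lemma P1_P0_coeff_eq:
  fixes p q a b :: "'a::field"
  assumes "p \<noteq> 0" "q \<noteq> 0" "a \<noteq> 0" "b \<noteq> 0"
  shows "p^2 / q * (1 / ((p * q)^3 * a * b) * (- p * q^2)) = - 1 / (q^2 * a * b)"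
  using assms by (simp add: field_simps power2_eq_square power3_eq_cube)

theorem mainTheorem3:
  shows "eps_s AmW
     (smult (- 1 / ((1 + QmL^2)^2 * QmL^2 * QnL^2))
        (([:0, 1:] + 1) * ([:0, 1:] - [:QmL^2:]) * ALk))"
proof -
  have "eps_s AmW (smult ((1 - QmL^2)^2 / (1 + QmL^2)) ([:0, 1:] + 1)
      * smult (1 / ((1 - QmL^4)^3 * QmL^2 * QnL^2))
          (([:0, 1:] - [:QmL^2:]) * P0_numerator [:QmL^2:] [:QnL^2:] [:0, 1:]))"
    unfolding AmW_def by (intro eps_s_skm eps_s_P1 eps_s_P0 eps_s_sK_Em)
  also have "\<dots> = smult ((1 - QmL^2)^2 / (1 + QmL^2) * (1 / ((1 - QmL^4)^3 * QmL^2 * QnL^2)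
      * (- (1 - QmL^2) * (1 + QmL^2)^2))) (([:0, 1:] + 1) * ([:0, 1:] - [:QmL^2:]) * ALk)"
    by (simp only: P0_numerator_X mult_smult_left mult_smult_right smult_smult ac_simps)
  also have "\<dots> = smult (- 1 / ((1 + QmL^2)^2 * QmL^2 * QnL^2))
      (([:0, 1:] + 1) * ([:0, 1:] - [:QmL^2:]) * ALk)"
    using P1_P0_coeff_eq[of "1 - QmL^2" "1 + QmL^2" "QmL^2" "QnL^2"]
    by (simp only: QmL_QnL_nonzero power_not_zero one_minus_QmL_pow4 simp_thms)
  finally show ?thesis .
qed

end
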